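(* If Algorithm GP (described below), run on a graph $G$, returns a pair $(X,\mathcal{B})$, then $(X,\mathcal{B})$ is a good partition of $G$ (regardless of which admissible vertices are chosen in step (c)).
   Context: Definitions. Partitions are into nonempty blocks; $\mathcal{A}\sqsubseteq\mathcal{B}$ means every block of $\mathcal{A}$ is contained in a block of $\mathcal{B}$; $\mathsf{CC}(H)$ is the partition of $V(H)$ into vertex sets of connected components. For a maximal clique $X$ of a chordal graph $H$, $H$ is an $X$-interval graph if there is an ordering $(K_1,\dots,K_k,X)$ of all maximal cliques of $H$ ending with $X$ such that for each vertex the cliques containing it are consecutive. For $X\subseteq V(G)$, $Y\subseteq X$, a partition $\mathcal{B}$ of $V(G)\setminus X$, a block $B$ and $x\in Y$: $N(x)$ is minimal in $B$ for $Y$ if $N(x)\cap B\subseteq N(y)$ for all $y\in Y$; $x$ is removable from $Y$ for $\mathcal{B}$ if $N(x)$ is minimal for $Y$ in at least $|\mathcal{B}|-1$ blocks. A good partition of $G$ is a pair $(X,\mathcal{B})$, $X$ a maximal clique, $\mathcal{B}$ a partition of $V(G)\setminus X$, with (i) $\mathsf{CC}(G-X)\sqsubseteq\mathcal{B}$; (ii) $G[X\cup B]$ is an $X$-interval graph for all $B\in\mathcal{B}$; (iii) there is an ordering $(x_1,\dots,x_t)$ of $X$ with each $x_i$ removable from $\{x_i,\dots,x_t\}$ for $\mathcal{B}$. For $W\subseteq X$, $x\in W$ and a partition $\mathcal{A}$ of $V(G)\setminus X$, $\mathsf{notmin}(x,W,\mathcal{A})$ is the union of the blocks of $\mathcal{A}$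 in which $N(x)$ is not minimal for $W$. Algorithm GP on input $G$: if $G$ is not chordal, return "no". Otherwise, for each maximal clique $X$ of $G$: (a) if some component $C$ of $G-X$ has $G[X\cup C]$ not an $X$-interval graph, go to the next $X$; (b) set $\mathcal{A}\leftarrow\mathsf{CC}(G-X)$, $W\leftarrow X$; (c) while $W\neq\emptyset$: if there exists $w\in W$ such that $G[X\cup\mathsf{notmin}(w,W,\mathcal{A})]$ is an $X$-interval graph, choose any such $w$, replace the blocks of $\mathcal{A}$ contained in $\mathsf{notmin}(w,W,\mathcal{A})$ by their union, and set $W\leftarrow W\setminus\{w\}$; otherwise leave the while loop; (d) if $W=\emptyset$, return $(X,\mathcal{A})$. If no maximal clique led to a return, return "no". *)

theory Defs
  imports Main
begin

text \<open>A finite simple graph is given by a finite vertex set V and a symmetric,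
irreflexive adjacency relation E whose edges lie inside V.
Induced subgraphs G[S] are represented by (S, E).\<close>

definition graph :: "'a set \<Rightarrow> ('a \<Rightarrow> 'a \<Rightarrow> bool) \<Rightarrow> bool" where
  "graph V E \<longleftrightarrow> finite V \<and> (\<forall>u v. E u v \<longrightarrow> E v u) \<and> (\<forall>u. \<not> E u u)
     \<and> (\<forall>u v. E u v \<longrightarrow> u \<in> V \<and> v \<in> V)"

definition nbhd :: "'a set \<Rightarrow> ('a \<Rightarrow> 'a \<Rightarrow> bool) \<Rightarrow> 'a \<Rightarrow> 'a set" where
  "nbhd V E x = {y \<in> V. E x y}"

definition clique :: "'a set \<Rightarrow> ('a \<Rightarrow> 'a \<Rightarrow> bool) \<Rightarrow> 'a set \<Rightarrow> bool" where
  "clique S E K \<longleftrightarrow> K \<subseteq> S \<and> (\<forall>u\<in>K. \<forall>v\<in>K. u \<noteq> v \<longrightarrow> E u v)"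

definition max_clique :: "'a set \<Rightarrow> ('a \<Rightarrow> 'a \<Rightarrow> bool) \<Rightarrow> 'a set \<Rightarrow> bool" where
  "max_clique S E K \<longleftrightarrow> clique S E K \<and> (\<forall>K'. clique S E K' \<and> K \<subseteq> K' \<longrightarrow> K' = K)"

definition chordal :: "'a set \<Rightarrow> ('a \<Rightarrow> 'a \<Rightarrow> bool) \<Rightarrow> bool" where
  "chordal S E \<longleftrightarrow> \<not> (\<exists>cs. length cs \<ge> 4 \<and> distinct cs \<and> set cs \<subseteq> S
      \<and> (\<forall>i < length cs. E (cs ! i) (cs ! ((i + 1) mod length cs)))
      \<and> (\<forall>i < length cs. \<forall>j < length cs. E (cs ! i) (cs ! j) \<longrightarrow>
            j = (i + 1) mod length cs \<or> i = (j + 1) mod length cs))"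

definition X_interval :: "'a set \<Rightarrow> ('a \<Rightarrow> 'a \<Rightarrow> bool) \<Rightarrow> 'a set \<Rightarrow> bool" where
  "X_interval S E X \<longleftrightarrow> max_clique S E X \<and>
     (\<exists>Ks. distinct Ks \<and> set Ks = {K. max_clique S E K} \<and> Ks \<noteq> [] \<and> last Ks = X \<and>
        (\<forall>v\<in>S. \<forall>i j k. i \<le> j \<and> j \<le> k \<and> k < length Ks \<and> v \<in> Ks ! i \<and> v \<in> Ks ! k
             \<longrightarrow> v \<in> Ks ! j))"

definition reach :: "'a set \<Rightarrow> ('a \<Rightarrow> 'a \<Rightarrow> bool) \<Rightarrow> 'a \<Rightarrow> 'a \<Rightarrow> bool" where
  "reach S E = (\<lambda>u v. u \<in> S \<and> v \<in> S \<and> E u v)\<^sup>*\<^sup>*"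

definition CC :: "'a set \<Rightarrow> ('a \<Rightarrow> 'a \<Rightarrow> bool) \<Rightarrow> 'a set set" where
  "CC S E = (\<lambda>v. {u \<in> S. reach S E v u}) ` S"

definition is_partition :: "'a set set \<Rightarrow> 'a set \<Rightarrow> bool" where
  "is_partition P U \<longleftrightarrow> (\<forall>B\<in>P. B \<noteq> {}) \<and> \<Union>P = U \<and>
     (\<forall>B1\<in>P. \<forall>B2\<in>P. B1 \<noteq> B2 \<longrightarrow> B1 \<inter> B2 = {})"

definition refines :: "'a set set \<Rightarrow> 'a set set \<Rightarrow> bool" where
  "refines A B \<longleftrightarrow> (\<forall>a\<in>A. \<exists>b\<in>B. a \<subseteq> b)"

definition nbhd_minimal :: "'a set \<Rightarrow> ('a \<Rightarrow> 'a \<Rightarrow> bool) \<Rightarrow> 'a \<Rightarrow> 'a set \<Rightarrow> 'a set \<Rightarrow> bool" where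
  "nbhd_minimal V E x Y B \<longleftrightarrow> (\<forall>y\<in>Y. nbhd V E x \<inter> B \<subseteq> nbhd V E y)"

definition removable :: "'a set \<Rightarrow> ('a \<Rightarrow> 'a \<Rightarrow> bool) \<Rightarrow> 'a \<Rightarrow> 'a set \<Rightarrow> 'a set set \<Rightarrow> bool" where
  "removable V E x Y P \<longleftrightarrow> int (card {B \<in> P. nbhd_minimal V E x Y B}) \<ge> int (card P) - 1"

definition good_partition :: "'a set \<Rightarrow> ('a \<Rightarrow> 'a \<Rightarrow> bool) \<Rightarrow> 'a set \<Rightarrow> 'a set set \<Rightarrow> bool" where
  "good_partition V E X P \<longleftrightarrow> max_clique V E X \<and> is_partition P (V - X) \<and>
     refines (CC (V - X) E) P \<and>
     (\<forall>B\<in>P. X_interval (X \<union> B) E X) \<and>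
     (\<exists>xs. distinct xs \<and> set xs = X \<and>
        (\<forall>i < length xs. removable V E (xs ! i) (set (drop i xs)) P))"

definition notmin :: "'a set \<Rightarrow> ('a \<Rightarrow> 'a \<Rightarrow> bool) \<Rightarrow> 'a \<Rightarrow> 'a set \<Rightarrow> 'a set set \<Rightarrow> 'a set" where
  "notmin V E x W A = \<Union>{B \<in> A. \<not> nbhd_minimal V E x W B}"

definition merge_blocks :: "'a set set \<Rightarrow> 'a set \<Rightarrow> 'a set set" where
  "merge_blocks A N = {B \<in> A. \<not> B \<subseteq> N} \<union> (if \<Union>{B \<in> A. B \<subseteq> N} = {} then {}
       else {\<Union>{B \<in> A. B \<subseteq> N}})"

text \<open>One iteration of the while loop of step (c) for the clique X, for any admissible
choice of w.\<close>
inductive GP_step :: "'a set \<Rightarrow> ('a \<Rightarrow> 'a \<Rightarrow> bool) \<Rightarrow> 'a set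
    \<Rightarrow> 'a set set \<times> 'a set \<Rightarrow> 'a set set \<times> 'a set \<Rightarrow> bool"
  for V E X where
  "w \<in> W \<Longrightarrow> X_interval (X \<union> notmin V E w W A) E X \<Longrightarrow>
   GP_step V E X (A, W) (merge_blocks A (notmin V E w W A), W - {w})"

text \<open>Algorithm GP can return (X, A) on input G = (V, E): G is chordal, X is a maximal
clique passing the test of step (a), and some run of the loop (c), started from
(CC(G - X), X), reaches W = {} with current partition A.  Since the order in which the
maximal cliques are tried is arbitrary, every such X may be the clique processed first.\<close>
definition GP_returns :: "'a set \<Rightarrow> ('a \<Rightarrow> 'a \<Rightarrow> bool) \<Rightarrow> 'a set \<Rightarrow> 'a set set \<Rightarrow> bool" where
  "GP_returns V E X A \<longleftrightarrow> chordal V E \<and> max_clique V E X \<and>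
     (\<forall>C\<in>CC (V - X) E. X_interval (X \<union> C) E X) \<and>
     (GP_step V E X)\<^sup>*\<^sup>* (CC (V - X) E, X) (A, {})"

end

theory Submission
  imports Defs
begin

text \<open>Run the loop with the invariant that the current partition A is a partition of V - X
refining CC(G - X) into X-interval blocks, and that the vertices already removed from W can be
listed in a removal order that stays valid for every coarsening of A.  When w leaves W, all
blocks in which N(w) is not minimal for W are merged into one block; in any coarsening of the
new partition N(w) is then non-minimal in at most one block, so w is removable from W.  Later
steps only coarsen A and shrink W, so the order is preserved, and at W = {} it is the order
demanded by condition (iii).\<close>

lemma CC_eq_quotient: "CC S E = S // {(u, v). u \<in> S \<and> v \<in> S \<and> reach S E u v}"
  unfolding CC_def quotient_def by auto

lemma equiv_reach:
  assumes "symp E"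
  shows "equiv S {(u, v). u \<in> S \<and> v \<in> S \<and> reach S E u v}"
proof -
  have "symp (\<lambda>u v. u \<in> S \<and> v \<in> S \<and> E u v)"
    using assms by (auto intro: sympI dest: sympD)
  then have "symp (reach S E)"
    unfolding reach_def by (rule symp_rtranclp)
  moreover have "transp (reach S E)"
    unfolding reach_def by (rule transp_rtranclp)
  moreover have "reach S E u u" for u
    unfolding reach_def by simp
  ultimately show ?thesis
    unfolding equiv_def refl_on_def sym_def trans_def
    by (auto dest: sympD transpD simp: reach_def[symmetric])
qed

lemma is_partition_CC:
  assumes "symp E"
  shows "is_partition (CC S E) S"
proof -
  note equiv = equiv_reach[OF assms, of S]
  show ?thesis
    unfolding is_partition_def CC_eq_quotient
    using in_quotient_imp_non_empty[OF equiv] Union_quotient[OF equiv] quotient_disj[OF equiv]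
    by blast
qed

lemma refines_refl: "refines A A"
  unfolding refines_def by blast

lemma refines_trans: "refines A B \<Longrightarrow> refines B C \<Longrightarrow> refines A C"
  unfolding refines_def by (meson subset_trans)

lemma merge_partition:
  assumes "is_partition A U"
  shows "is_partition (merge_blocks A N) U"
proof -
  let ?M = "\<Union>{B \<in> A. B \<subseteq> N}"
  have "B \<inter> ?M = {}" if "B \<in> A" "\<not> B \<subseteq> N" for B
    using assms that unfolding is_partition_def by blast
  then show ?thesis
    using assms unfolding is_partition_def merge_blocks_def by (auto simp: Int_commute)
qed

lemma merge_refines:
  assumes "is_partition A U"
  shows "refines A (merge_blocks A N)"
  using assms unfolding is_partition_def refines_def merge_blocks_def by auto

lemma merge_blocks_subset:
  assumes "\<Union>{B \<in> A. B \<subseteq> N} = N"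
  shows "merge_blocks A N \<subseteq> insert N A"
  using assms unfolding merge_blocks_def by auto

lemma mem_merge_blocks:
  assumes "\<Union>{B \<in> A. B \<subseteq> N} = N" and "N \<noteq> {}"
  shows "N \<in> merge_blocks A N"
  using assms unfolding merge_blocks_def by auto

lemma Union_blocks_notmin: "\<Union>{B \<in> A. B \<subseteq> notmin V E w W A} = notmin V E w W A"
  unfolding notmin_def by blast

lemma nbhd_minimal_subset: "nbhd_minimal V E x Y B \<Longrightarrow> B' \<subseteq> B \<Longrightarrow> nbhd_minimal V E x Y B'"
  unfolding nbhd_minimal_def by blast

lemma nbhd_minimal_outside_notmin: "nbhd_minimal V E x Y (\<Union>A - notmin V E x Y A)"
  unfolding nbhd_minimal_def notmin_def by blast

lemma finite_partition: "is_partition P U \<Longrightarrow> finite U \<Longrightarrow> finite P"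
  unfolding is_partition_def by (metis Pow_iff finite_Pow_iff finite_subset subsetI Sup_upper)

lemma removable_if_nonminimal_in_one_block:
  assumes "finite P" and "\<And>B. B \<in> P \<Longrightarrow> \<not> nbhd_minimal V E x Y B \<Longrightarrow> B = C"
  shows "removable V E x Y P"
proof -
  let ?min = "{B \<in> P. nbhd_minimal V E x Y B}" and ?nonmin = "{B \<in> P. \<not> nbhd_minimal V E x Y B}"
  have "card ?nonmin \<le> card {C}"
    using assms(2) by (intro card_mono) auto
  moreover have "card P = card ?min + card ?nonmin"
    using assms(1) by (subst card_Un_disjoint[symmetric]) (auto intro: arg_cong[where f = card])
  ultimately show ?thesis
    unfolding removable_def by simp
qed

lemma removable_after_merge:
  assumes A: "is_partition A U" and P: "is_partition P U" and "finite U"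
    and coarser: "refines (merge_blocks A (notmin V E w W A)) P"
  shows "removable V E w W P"
proof -
  let ?N = "notmin V E w W A"
  have finP: "finite P" using P \<open>finite U\<close> by (rule finite_partition)
  have meets: "B \<inter> ?N \<noteq> {}" if "B \<in> P" "\<not> nbhd_minimal V E w W B" for B
  proof
    assume "B \<inter> ?N = {}"
    moreover have "B \<subseteq> \<Union>A"
      using that(1) A P unfolding is_partition_def by blast
    ultimately have "B \<subseteq> \<Union>A - ?N" by blast
    then have "nbhd_minimal V E w W B"
      by (rule nbhd_minimal_subset[OF nbhd_minimal_outside_notmin])
    with that(2) show False ..
  qed
  show ?thesis
  proof (cases "?N = {}")
    case True
    with finP meets show ?thesis
      by (intro removable_if_nonminimal_in_one_block[where C = "{}"]) auto
  next
    case False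
    then have "?N \<in> merge_blocks A ?N" by (intro mem_merge_blocks Union_blocks_notmin)
    with coarser obtain B1 where "B1 \<in> P" "?N \<subseteq> B1" unfolding refines_def by blast
    have "B = B1" if "B \<in> P" "\<not> nbhd_minimal V E w W B" for B
    proof -
      from meets[OF that] \<open>?N \<subseteq> B1\<close> have "B \<inter> B1 \<noteq> {}" by blast
      with that(1) \<open>B1 \<in> P\<close> P show "B = B1" unfolding is_partition_def by blast
    qed
    with finP show ?thesis by (rule removable_if_nonminimal_in_one_block)
  qed
qed

text \<open>Removability is required for every coarsening of A because the later merges of the loop
coarsen A further.\<close>

definition removal_order :: "'a set \<Rightarrow> ('a \<Rightarrow> 'a \<Rightarrow> bool) \<Rightarrow> 'a set \<Rightarrow> 'a set set \<Rightarrow> 'a set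
    \<Rightarrow> 'a list \<Rightarrow> bool" where
  "removal_order V E X A W xs \<longleftrightarrow> distinct xs \<and> set xs \<inter> W = {} \<and> set xs \<union> W = X \<and>
     (\<forall>i < length xs. \<forall>P. is_partition P (V - X) \<and> refines A P \<longrightarrow>
        removable V E (xs ! i) (set (drop i xs) \<union> W) P)"

definition GP_invariant :: "'a set \<Rightarrow> ('a \<Rightarrow> 'a \<Rightarrow> bool) \<Rightarrow> 'a set \<Rightarrow> 'a set set \<Rightarrow> 'a set
    \<Rightarrow> bool" where
  "GP_invariant V E X A W \<longleftrightarrow> is_partition A (V - X) \<and> refines (CC (V - X) E) A \<and>
     (\<forall>B\<in>A. X_interval (X \<union> B) E X) \<and> (\<exists>xs. removal_order V E X A W xs)"

lemma removal_order_snoc: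
  assumes order: "removal_order V E X A W xs" and "w \<in> W"
    and A: "is_partition A (V - X)" and "finite V"
  shows "removal_order V E X (merge_blocks A (notmin V E w W A)) (W - {w}) (xs @ [w])"
proof -
  let ?A' = "merge_blocks A (notmin V E w W A)"
  have xs: "distinct xs" "set xs \<inter> W = {}" "set xs \<union> W = X"
    and rem: "\<And>i P. i < length xs \<Longrightarrow> is_partition P (V - X) \<Longrightarrow> refines A P \<Longrightarrow>
        removable V E (xs ! i) (set (drop i xs) \<union> W) P"
    using order unfolding removal_order_def by blast+
  have "removable V E ((xs @ [w]) ! i) (set (drop i (xs @ [w])) \<union> (W - {w})) P"
    if i: "i < length (xs @ [w])" and P: "is_partition P (V - X)" "refines ?A' P" for i P
  proof (cases "i < length xs")
    case True
    have "refines A P" using P(2) merge_refines[OF A] refines_trans by blast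
    with True P(1) have "removable V E (xs ! i) (set (drop i xs) \<union> W) P" by (rule rem)
    moreover have "set (drop i (xs @ [w])) \<union> (W - {w}) = set (drop i xs) \<union> W"
      using True \<open>w \<in> W\<close> by auto
    ultimately show ?thesis using True by (simp add: nth_append)
  next
    case False
    with i have "i = length xs" by simp
    moreover have "removable V E w W P"
      using A P(1) _ P(2) by (rule removable_after_merge) (use \<open>finite V\<close> in simp)
    moreover have "insert w (W - {w}) = W"
      using \<open>w \<in> W\<close> by blast
    ultimately show ?thesis by simp
  qed
  moreover have "distinct (xs @ [w])" "set (xs @ [w]) \<inter> (W - {w}) = {}"
    "set (xs @ [w]) \<union> (W - {w}) = X"
    using xs \<open>w \<in> W\<close> by auto
  ultimately show ?thesis
    unfolding removal_order_def by blast
qed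

lemma GP_invariant_step:
  assumes "finite V" and inv: "GP_invariant V E X A W" and "GP_step V E X (A, W) (A', W')"
  shows "GP_invariant V E X A' W'"
proof -
  from assms(3) obtain w where "w \<in> W" and notmin_interval: "X_interval (X \<union> notmin V E w W A) E X"
    and A': "A' = merge_blocks A (notmin V E w W A)" and W': "W' = W - {w}"
    by cases auto
  from inv obtain xs where A: "is_partition A (V - X)" and CC: "refines (CC (V - X) E) A"
    and intervals: "\<forall>B\<in>A. X_interval (X \<union> B) E X" and order: "removal_order V E X A W xs"
    unfolding GP_invariant_def by blast
  have "is_partition A' (V - X)"
    unfolding A' by (rule merge_partition[OF A])
  moreover have "refines (CC (V - X) E) A'"
    unfolding A' by (rule refines_trans[OF CC merge_refines[OF A]])
  moreover have "A' \<subseteq> insert (notmin V E w W A) A"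
    unfolding A' by (rule merge_blocks_subset[OF Union_blocks_notmin])
  with intervals notmin_interval have "\<forall>B\<in>A'. X_interval (X \<union> B) E X"
    by blast
  moreover have "removal_order V E X A' W' (xs @ [w])"
    unfolding A' W' by (rule removal_order_snoc[OF order \<open>w \<in> W\<close> A \<open>finite V\<close>])
  ultimately show ?thesis
    unfolding GP_invariant_def by blast
qed

lemma GP_invariant_init:
  assumes "symp E" and "\<forall>C\<in>CC (V - X) E. X_interval (X \<union> C) E X"
  shows "GP_invariant V E X (CC (V - X) E) X"
proof -
  have "removal_order V E X (CC (V - X) E) X []"
    unfolding removal_order_def by simp
  then show ?thesis
    unfolding GP_invariant_def using is_partition_CC[OF assms(1)] refines_refl assms(2) by blast
qed

lemma good_partition_if_GP_invariant:
  assumes "max_clique V E X" and "GP_invariant V E X P {}"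
  shows "good_partition V E X P"
proof -
  obtain xs where "removal_order V E X P {} xs" and P: "is_partition P (V - X)"
    using assms(2) unfolding GP_invariant_def by blast
  then have "distinct xs \<and> set xs = X \<and> (\<forall>i < length xs. removable V E (xs ! i) (set (drop i xs)) P)"
    unfolding removal_order_def using refines_refl by auto
  then show ?thesis
    using assms unfolding good_partition_def GP_invariant_def by blast
qed

theorem lemma3:
  fixes V :: "'a set" and E :: "'a \<Rightarrow> 'a \<Rightarrow> bool"
  assumes "graph V E"
    and "GP_returns V E X P"
  shows "good_partition V E X P"
proof -
  have "finite V" and "symp E"
    using assms(1) unfolding graph_def by (auto intro: sympI)
  have X: "max_clique V E X" and run: "(GP_step V E X)\<^sup>*\<^sup>* (CC (V - X) E, X) (P, {})"
    and "\<forall>C\<in>CC (V - X) E. X_interval (X \<union> C) E X"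
    using assms(2) unfolding GP_returns_def by blast+
  then have "GP_invariant V E X (CC (V - X) E) X"
    using GP_invariant_init[OF \<open>symp E\<close>] by blast
  with run have "GP_invariant V E X P {}"
    by (induction rule: rtranclp_induct2) (auto intro: GP_invariant_step[OF \<open>finite V\<close>])
  with X show ?thesis by (rule good_partition_if_GP_invariant)
qed

end
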